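(* Let $\mathbb{T}$ be a time scale with $0\in\mathbb{T}_\kappa^\kappa$, let $\alpha\in]0,1]$, and let $f:\mathbb{T}\to\mathbb{R}$, $f(t)=|t|$. Then $$f^{\diamondsuit^\alpha}(0)=\begin{cases}0&\text{if }0\text{ is dense},\\ \dfrac{\sigma(0)+\rho(0)}{[\sigma(0)-\rho(0)]^\alpha}&\text{otherwise}.\end{cases}$$
   Context: A time scale $\mathbb{T}$ is a nonempty closed subset of $\mathbb{R}$. $\sigma(t)=\inf\{s\in\mathbb{T}:s>t\}$ ($\inf\emptyset=\sup\mathbb{T}$), $\rho(t)=\sup\{s\in\mathbb{T}:s<t\}$ ($\sup\emptyset=\inf\mathbb{T}$); $f^\sigma=f\circ\sigma$, $f^\rho=f\circ\rho$. A point $t$ is dense if $\sigma(t)=t=\rho(t)$. $\mathbb{T}^\kappa=\mathbb{T}\setminus\{\sup\mathbb{T}\}$ if $\sup\mathbb{T}$ is finite and left-scattered, else $\mathbb{T}$; $\mathbb{T}_\kappa=\mathbb{T}\setminus\{\inf\mathbb{T}\}$ if $\inf\mathbb{T}$ is finite and right-scattered, else $\mathbb{T}$; $\mathbb{T}_\kappa^\kappa=\mathbb{T}_\kappa\cap\mathbb{T}^\kappa$. Symmetric fractional derivative of order $\alpha$ at $t\in\mathbb{T}_\kappa^\kappa$: the real number $f^{\diamondsuit^\alpha}(t)$ (if it exists) such that for every $\varepsilon>0$ there is a neighborhood $U\subset\mathbb{T}$ of $t$ with $\big|[f^\sigma(t)-f(s)+f(2t-s)-f^\rho(t)]-f^{\diamondsuit^\alpha}(t)[\sigma(t)+2t-2s-\rho(t)]^\alpha\big|\le\varepsilon|\sigma(t)+2t-2s-\rho(t)|^\alpha$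 for all $s\in U$ with $2t-s\in U$. *)

theory Defs
  imports "HOL-Analysis.Analysis"
begin

definition time_scale :: "real set \<Rightarrow> bool" where
  "time_scale T \<longleftrightarrow> T \<noteq> {} \<and> closed T"

definition fjump :: "real set \<Rightarrow> real \<Rightarrow> real" (\<open>\<sigma>\<close>) where
  "\<sigma> T t = (if {s\<in>T. s > t} = {} then Sup T else Inf {s\<in>T. s > t})"

definition bjump :: "real set \<Rightarrow> real \<Rightarrow> real" (\<open>\<rho>\<close>) where
  "\<rho> T t = (if {s\<in>T. s < t} = {} then Inf T else Sup {s\<in>T. s < t})"

definition dense_point :: "real set \<Rightarrow> real \<Rightarrow> bool" where
  "dense_point T t \<longleftrightarrow> \<sigma> T t = t \<and> \<rho> T t = t"

definition T_upper_kappa :: "real set \<Rightarrow> real set" where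
  "T_upper_kappa T = (if bdd_above T \<and> \<rho> T (Sup T) < Sup T then T - {Sup T} else T)"

definition T_lower_kappa :: "real set \<Rightarrow> real set" where
  "T_lower_kappa T = (if bdd_below T \<and> \<sigma> T (Inf T) > Inf T then T - {Inf T} else T)"

definition T_kappa_kappa :: "real set \<Rightarrow> real set" where
  "T_kappa_kappa T = T_lower_kappa T \<inter> T_upper_kappa T"

definition has_sym_frac_deriv ::
  "real set \<Rightarrow> real \<Rightarrow> (real \<Rightarrow> real) \<Rightarrow> real \<Rightarrow> real \<Rightarrow> bool" where
  "has_sym_frac_deriv T \<alpha> f t D \<longleftrightarrow> t \<in> T_kappa_kappa T \<and>
     (\<forall>\<epsilon>>0. \<exists>V. open V \<and> t \<in> V \<and>
        (\<forall>s. s \<in> T \<inter> V \<and> 2 * t - s \<in> T \<inter> V \<longrightarrow>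
           \<bar>(f (\<sigma> T t) - f s + f (2 * t - s) - f (\<rho> T t))
              - D * (\<sigma> T t + 2 * t - 2 * s - \<rho> T t) powr \<alpha>\<bar>
           \<le> \<epsilon> * \<bar>\<sigma> T t + 2 * t - 2 * s - \<rho> T t\<bar> powr \<alpha>))"

end

theory Submission
  imports Defs
begin

text \<open>Since \<open>\<sigma>(0) \<ge> 0 \<ge> \<rho>(0)\<close>, the numerator of the difference quotient of \<open>|t|\<close> at 0 is
  \<open>|\<sigma>(0)| - |s| + |-s| - |\<rho>(0)| = \<sigma>(0) + \<rho>(0)\<close> for every \<open>s\<close>. At a dense point this is 0,
  so the derivative is 0. At a scattered point, say \<open>\<sigma>(0) > 0\<close>, no point of \<open>T\<close> lies in
  \<open>]0, \<sigma>(0)[\<close>; as one of \<open>s, -s\<close> is positive unless \<open>s = 0\<close>, the only admissible \<open>s\<close> near 0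
  is \<open>s = 0\<close>, where the defining inequality is an identity for the stated value.\<close>

lemma T_kappa_kappa_subset: "T_kappa_kappa T \<subseteq> T"
  unfolding T_kappa_kappa_def T_lower_kappa_def T_upper_kappa_def by auto

lemma fjump_le:
  assumes "s \<in> T" "t < s"
  shows "\<sigma> T t \<le> s"
proof -
  have "Inf {s\<in>T. s > t} \<le> s"
    by (rule cInf_lower) (use assms in \<open>auto intro: bdd_belowI[where m=t]\<close>)
  with assms show ?thesis
    unfolding fjump_def by (auto simp del: Collect_empty_eq)
qed

lemma fjump_ge:
  assumes "t \<in> T"
  shows "t \<le> \<sigma> T t"
proof (cases "{s\<in>T. s > t} = {}")
  case True
  then have "bdd_above T"
    by (auto intro!: bdd_aboveI[where M=t] simp: not_less)
  with assms True show ?thesis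
    unfolding fjump_def by (simp add: cSup_upper)
next
  case False
  then have "t \<le> Inf {s\<in>T. s > t}"
    by (intro cInf_greatest) auto
  with False show ?thesis
    unfolding fjump_def by (auto simp del: Collect_empty_eq)
qed

lemma bjump_ge:
  assumes "s \<in> T" "s < t"
  shows "s \<le> \<rho> T t"
proof -
  have "s \<le> Sup {s\<in>T. s < t}"
    by (rule cSup_upper) (use assms in \<open>auto intro: bdd_aboveI[where M=t]\<close>)
  with assms show ?thesis
    unfolding bjump_def by (auto simp del: Collect_empty_eq)
qed

lemma bjump_le:
  assumes "t \<in> T"
  shows "\<rho> T t \<le> t"
proof (cases "{s\<in>T. s < t} = {}")
  case True
  then have "bdd_below T"
    by (auto intro!: bdd_belowI[where m=t] simp: not_less)
  with assms True show ?thesis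
    unfolding bjump_def by (simp add: cInf_lower)
next
  case False
  then have "Sup {s\<in>T. s < t} \<le> t"
    by (intro cSup_least) auto
  with False show ?thesis
    unfolding bjump_def by (auto simp del: Collect_empty_eq)
qed

lemma jump_gap_pos:
  assumes "t \<in> T" "\<not> dense_point T t"
  shows "\<rho> T t < \<sigma> T t"
  using assms fjump_ge[of t T] bjump_le[of t T] unfolding dense_point_def by fastforce

lemma scattered_symmetric_pairs_trivial:
  assumes "t \<in> T" "\<not> dense_point T t"
  obtains r where "r > 0" "\<And>s. s \<in> T \<Longrightarrow> 2 * t - s \<in> T \<Longrightarrow> \<bar>s - t\<bar> < r \<Longrightarrow> s = t"
proof -
  have pair_split: "(s > t \<and> 2 * t - s < t) \<or> (2 * t - s > t \<and> s < t)" if "s \<noteq> t" for s :: real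
    using that by linarith
  consider "t < \<sigma> T t" | "\<rho> T t < t"
    using assms fjump_ge[of t T] bjump_le[of t T] unfolding dense_point_def by fastforce
  then show ?thesis
  proof cases
    case 1
    show ?thesis
    proof (rule that[of "\<sigma> T t - t"])
      fix s assume "s \<in> T" "2 * t - s \<in> T" "\<bar>s - t\<bar> < \<sigma> T t - t"
      then show "s = t"
        using pair_split[of s] fjump_le[of s T t] fjump_le[of "2 * t - s" T t] by force
    qed (use 1 in simp)
  next
    case 2
    show ?thesis
    proof (rule that[of "t - \<rho> T t"])
      fix s assume "s \<in> T" "2 * t - s \<in> T" "\<bar>s - t\<bar> < t - \<rho> T t"
      then show "s = t"
        using pair_split[of s] bjump_ge[of s T t] bjump_ge[of "2 * t - s" T t] by force
    qed (use 2 in simp)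
  qed
qed

lemma has_sym_frac_deriv_scattered:
  assumes "t \<in> T_kappa_kappa T" "\<not> dense_point T t"
  shows "has_sym_frac_deriv T \<alpha> f t
           ((f (\<sigma> T t) - f (\<rho> T t)) / (\<sigma> T t - \<rho> T t) powr \<alpha>)"
proof -
  have "t \<in> T" using assms(1) T_kappa_kappa_subset by blast
  then obtain r where "r > 0"
    and only_t: "\<And>s. s \<in> T \<Longrightarrow> 2 * t - s \<in> T \<Longrightarrow> \<bar>s - t\<bar> < r \<Longrightarrow> s = t"
    using assms(2) scattered_symmetric_pairs_trivial by blast
  have "(\<sigma> T t - \<rho> T t) powr \<alpha> > 0"
    using jump_gap_pos[OF \<open>t \<in> T\<close> assms(2)] by simp
  then have exact: "(f (\<sigma> T t) - f (\<rho> T t)) / (\<sigma> T t - \<rho> T t) powr \<alpha>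
                      * (\<sigma> T t - \<rho> T t) powr \<alpha> = f (\<sigma> T t) - f (\<rho> T t)"
    by simp
  show ?thesis
    unfolding has_sym_frac_deriv_def
  proof (intro conjI allI impI exI[of _ "ball t r"])
    fix \<epsilon> s :: real
    assume "0 < \<epsilon>" and "s \<in> T \<inter> ball t r \<and> 2 * t - s \<in> T \<inter> ball t r"
    then have "s = t"
      using only_t by (auto simp: dist_real_def abs_minus_commute)
    with exact \<open>0 < \<epsilon>\<close> show "\<bar>f (\<sigma> T t) - f s + f (2 * t - s) - f (\<rho> T t)
        - (f (\<sigma> T t) - f (\<rho> T t)) / (\<sigma> T t - \<rho> T t) powr \<alpha>
          * (\<sigma> T t + 2 * t - 2 * s - \<rho> T t) powr \<alpha>\<bar>
      \<le> \<epsilon> * \<bar>\<sigma> T t + 2 * t - 2 * s - \<rho> T t\<bar> powr \<alpha>"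
      by simp
  qed (use assms(1) \<open>r > 0\<close> in auto)
qed

lemma has_sym_frac_deriv_dense_symmetric:
  assumes "t \<in> T_kappa_kappa T" "dense_point T t" "\<And>s. f (2 * t - s) = f s"
  shows "has_sym_frac_deriv T \<alpha> f t 0"
  using assms unfolding has_sym_frac_deriv_def dense_point_def
  by (auto intro!: exI[of _ UNIV])

theorem proposition3p25:
  fixes T :: "real set" and \<alpha> :: real
  assumes "time_scale T" and "0 \<in> T_kappa_kappa T"
    and "0 < \<alpha>" and "\<alpha> \<le> 1"
  shows "has_sym_frac_deriv T \<alpha> (\<lambda>t. \<bar>t\<bar>) 0
           (if dense_point T 0 then 0
            else (\<sigma> T 0 + \<rho> T 0) / (\<sigma> T 0 - \<rho> T 0) powr \<alpha>)"
proof (cases "dense_point T 0")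
  case True
  then show ?thesis
    using has_sym_frac_deriv_dense_symmetric[OF assms(2)] by simp
next
  case False
  have "0 \<in> T" using assms(2) T_kappa_kappa_subset by blast
  then have "\<bar>\<sigma> T 0\<bar> - \<bar>\<rho> T 0\<bar> = \<sigma> T 0 + \<rho> T 0"
    using fjump_ge[of 0 T] bjump_le[of 0 T] by simp
  then show ?thesis
    using has_sym_frac_deriv_scattered[OF assms(2) False, of \<alpha> abs] False by simp
qed

end
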